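(* Let $d\ge1$, $a$, $b$ be integers and $x_0$ a real number. If $\pi(x;d,a)\ge\pi(x;d,b)$ for all $x\le x_0$, then for all $x\le x_0$ both $N(x;d,a)\ge N(x;d,b)$ and $\mu_{d,a}(x)\ge\mu_{d,b}(x)$.
   Context: $\pi(x;d,a)$ is the number of primes $p\le x$ with $p\equiv a\pmod d$. Let $S_{d,a}$ be the set of positive integers all of whose prime divisors $p$ satisfy $p\equiv a\pmod d$ (including $1$). Then $N(x;d,a)=\#\{n\le x: n\in S_{d,a}\}$ and $\mu_{d,a}(x)=\sum_{n\le x,\ n\in S_{d,a}}1/n$ (in the paper, $\mu_{g_{d,a}}(x)$ with $g_{d,a}$ the indicator of $S_{d,a}$). *)

theory Defs
  imports "HOL-Number_Theory.Number_Theory"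
begin

definition prime_count_ap :: "int \<Rightarrow> int \<Rightarrow> real \<Rightarrow> nat" where
  "prime_count_ap d a x = card {p::nat. prime p \<and> real p \<le> x \<and> [int p = a] (mod d)}"

definition in_S :: "int \<Rightarrow> int \<Rightarrow> nat \<Rightarrow> bool" where
  "in_S d a n \<longleftrightarrow> n > 0 \<and> (\<forall>p\<in>prime_factors n. [int p = a] (mod d))"

definition N_ap :: "int \<Rightarrow> int \<Rightarrow> real \<Rightarrow> nat" where
  "N_ap d a x = card {n::nat. real n \<le> x \<and> in_S d a n}"

definition mu_ap :: "int \<Rightarrow> int \<Rightarrow> real \<Rightarrow> real" where
  "mu_ap d a x = (\<Sum>n\<in>{n::nat. real n \<le> x \<and> in_S d a n}. 1 / real n)"

end

theory Submission
  imports Defs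
begin

text \<open>
  Counting dominance \<open>\<pi>(y;d,b) \<le> \<pi>(y;d,a)\<close> for all \<open>y \<le> x\<close> lets us assign to every prime
  \<open>q \<le> x\<close> with \<open>q \<equiv> b\<close> a distinct prime \<open>f q \<le> q\<close> with \<open>f q \<equiv> a\<close> (greedily, from the
  largest \<open>q\<close> downwards). Replacing every prime factor \<open>q\<close> of \<open>n \<in> S\<^sub>d\<^sub>,\<^sub>b\<close> by \<open>f q\<close> then
  maps \<open>S\<^sub>d\<^sub>,\<^sub>b \<inter> [1,x]\<close> injectively into \<open>S\<^sub>d\<^sub>,\<^sub>a \<inter> [1,x]\<close> without increasing any element,
  which compares every antitone nonnegative weight summed over the two sets, in particular
  the weights \<open>1\<close> and \<open>1/n\<close>.
\<close>

definition count_dominated :: "'a::linorder set \<Rightarrow> 'a set \<Rightarrow> bool" where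
  "count_dominated B A \<longleftrightarrow> (\<forall>y. card {b\<in>B. b \<le> y} \<le> card {a\<in>A. a \<le> y})"

lemma count_dominated_remove_match:
  fixes A B :: "'a::linorder set"
  assumes "finite A" "finite B" "\<forall>b\<in>B. b < m" "count_dominated (insert m B) A"
  defines "c \<equiv> Max {a\<in>A. a \<le> m}"
  shows "c \<in> A" "c \<le> m" "count_dominated B (A - {c})"
proof -
  define Am where "Am = {a\<in>A. a \<le> m}"
  have dominated: "card {b\<in>insert m B. b \<le> y} \<le> card {a\<in>A. a \<le> y}" for y
    using assms(4) unfolding count_dominated_def by blast
  have "m \<notin> B" "finite Am"
    using assms(1,3) by (auto simp: Am_def)
  have "{b\<in>insert m B. b \<le> m} = insert m B"
    using assms(3) by auto
  then have "card (insert m B) \<le> card Am"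
    using dominated[of m] by (simp only: Am_def)
  then have card_Am: "card B < card Am"
    using \<open>m \<notin> B\<close> assms(2) by simp
  then have "Am \<noteq> {}" by auto
  moreover have "c = Max Am"
    by (simp add: c_def Am_def)
  ultimately have "c \<in> Am" and c_max: "\<And>a. a \<in> Am \<Longrightarrow> a \<le> c"
    using \<open>finite Am\<close> by auto
  then show "c \<in> A" "c \<le> m"
    by (auto simp: Am_def)
  have "card {b\<in>B. b \<le> y} \<le> card {a\<in>A - {c}. a \<le> y}" for y
  proof (cases "m \<le> y")
    case True
    have "card {b\<in>B. b \<le> y} + 1 = card (insert m {b\<in>B. b \<le> y})"
      using \<open>m \<notin> B\<close> assms(2) by simp
    also have "insert m {b\<in>B. b \<le> y} = {b\<in>insert m B. b \<le> y}"
      using True by auto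
    also have "card \<dots> \<le> card {a\<in>A. a \<le> y}"
      by (rule dominated)
    also have "{a\<in>A. a \<le> y} = insert c {a\<in>A - {c}. a \<le> y}"
      using \<open>c \<in> Am\<close> True by (auto simp: Am_def)
    also have "card \<dots> = card {a\<in>A - {c}. a \<le> y} + 1"
      using assms(1) by simp
    finally show ?thesis
      by simp
  next
    case False
    show ?thesis
    proof (cases "c \<le> y")
      case True
      \<comment> \<open>then \<open>A\<close> has no element in \<open>(y, m]\<close>, so removing \<open>c\<close> leaves \<open>card Am - 1 \<ge> card B\<close> elements\<close>
      have "{a\<in>A - {c}. a \<le> y} = Am - {c}"
        using True False c_max by (force simp: Am_def)
      moreover have "card {b\<in>B. b \<le> y} \<le> card B"
        using assms(2) by (intro card_mono) auto
      ultimately show ?thesis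
        using card_Am \<open>c \<in> Am\<close> \<open>finite Am\<close> by simp
    next
      case c_gt: False
      have "{a\<in>A - {c}. a \<le> y} = {a\<in>A. a \<le> y}" "{b\<in>B. b \<le> y} = {b\<in>insert m B. b \<le> y}"
        using False c_gt by auto
      then show ?thesis
        using dominated[of y] by (simp only:)
    qed
  qed
  then show "count_dominated B (A - {c})"
    by (simp add: count_dominated_def)
qed

lemma ex_inj_below_if_count_dominated:
  fixes A B :: "'a::linorder set"
  assumes "finite A" "finite B" "count_dominated B A"
  obtains f where "inj_on f B" "f ` B \<subseteq> A" "\<And>b. b \<in> B \<Longrightarrow> f b \<le> b"
proof -
  have "\<exists>f. inj_on f B \<and> f ` B \<subseteq> A \<and> (\<forall>b\<in>B. f b \<le> b)"
    using assms(2,1,3)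
  proof (induction B arbitrary: A rule: finite_linorder_max_induct)
    case empty
    then show ?case by auto
  next
    case (insert m B)
    define c where "c = Max {a\<in>A. a \<le> m}"
    have "c \<in> A" "c \<le> m" "count_dominated B (A - {c})"
      using count_dominated_remove_match[OF insert.prems(1) insert.hyps(1,2) insert.prems(2)]
      by (simp_all add: c_def)
    then obtain f where f: "inj_on f B" "f ` B \<subseteq> A - {c}" "\<forall>b\<in>B. f b \<le> b"
      using insert.IH[of "A - {c}"] insert.prems(1) by auto
    have "m \<notin> B"
      using insert.hyps(2) by blast
    then have "inj_on (f(m := c)) (insert m B)"
      using f(1,2) by (auto simp: inj_on_def)
    moreover have "(f(m := c)) ` insert m B \<subseteq> A" "\<forall>b\<in>insert m B. (f(m := c)) b \<le> b"
      using f(2,3) \<open>c \<in> A\<close> \<open>c \<le> m\<close> \<open>m \<notin> B\<close> by auto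
    ultimately show ?case by blast
  qed
  then show ?thesis
    using that by blast
qed

lemma prod_mset_image_le:
  fixes f g :: "'a \<Rightarrow> nat"
  assumes "\<And>x. x \<in># M \<Longrightarrow> f x \<le> g x"
  shows "(\<Prod>x\<in>#M. f x) \<le> (\<Prod>x\<in>#M. g x)"
  using assms by (induction M) (simp_all add: mult_le_mono)

definition prime_supported :: "nat set \<Rightarrow> nat \<Rightarrow> bool" where
  "prime_supported P n \<longleftrightarrow> n > 0 \<and> prime_factors n \<subseteq> P"

lemma prime_supported_truncate:
  assumes "real n \<le> x"
  shows "prime_supported P n \<longleftrightarrow> prime_supported {p\<in>P. prime p \<and> real p \<le> x} n"
proof -
  have "real p \<le> x" if "n > 0" "p \<in> prime_factors n" for p
    using that assms dvd_imp_le[of p n] by force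
  then show ?thesis
    by (auto simp: prime_supported_def)
qed

definition subst_primes :: "(nat \<Rightarrow> nat) \<Rightarrow> nat \<Rightarrow> nat" where
  "subst_primes f n = (\<Prod>p\<in>#prime_factorization n. f p)"

lemma prime_factorization_subst_primes:
  assumes "\<And>p. p \<in> prime_factors n \<Longrightarrow> prime (f p)"
  shows "prime_factorization (subst_primes f n) = image_mset f (prime_factorization n)"
  unfolding subst_primes_def
  by (rule prime_factorization_prod_mset_primes) (use assms in auto)

lemma subst_primes_pos:
  assumes "\<And>p. p \<in> prime_factors n \<Longrightarrow> prime (f p)"
  shows "subst_primes f n > 0"
proof -
  have "0 \<notin># image_mset f (prime_factorization n)"
    using assms not_prime_0 by (fastforce simp del: in_prime_factors_iff)
  then have "subst_primes f n \<noteq> 0"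
    by (simp add: subst_primes_def)
  then show ?thesis
    by simp
qed

lemma subst_primes_le:
  assumes "n > 0" "\<And>p. p \<in> prime_factors n \<Longrightarrow> f p \<le> p"
  shows "subst_primes f n \<le> n"
proof -
  have "subst_primes f n \<le> (\<Prod>p\<in>#prime_factorization n. p)"
    unfolding subst_primes_def by (rule prod_mset_image_le) (use assms(2) in auto)
  then show ?thesis
    using assms(1) by simp
qed

lemma prime_supported_subst_primes:
  assumes "prime_supported Q n" "f ` Q \<subseteq> P" "\<forall>p\<in>P. prime p"
  shows "prime_supported P (subst_primes f n)"
proof -
  have "prime_factors n \<subseteq> Q"
    using assms(1) by (simp add: prime_supported_def)
  then have primes: "\<And>p. p \<in> prime_factors n \<Longrightarrow> prime (f p)"
    using assms(2,3) by blast
  have "prime_factors (subst_primes f n) = f ` prime_factors n"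
    using prime_factorization_subst_primes[OF primes] by simp
  also have "\<dots> \<subseteq> P"
    using \<open>prime_factors n \<subseteq> Q\<close> assms(2) by blast
  finally show ?thesis
    using subst_primes_pos[OF primes] by (simp add: prime_supported_def)
qed

lemma inj_on_subst_primes:
  assumes "inj_on f Q" "\<forall>q\<in>Q. prime (f q)"
  shows "inj_on (subst_primes f) {n. prime_supported Q n}"
proof (rule inj_onI)
  fix m n
  assume m: "m \<in> {n. prime_supported Q n}" and n: "n \<in> {n. prime_supported Q n}"
    and eq: "subst_primes f m = subst_primes f n"
  have pf: "prime_factorization (subst_primes f k) = image_mset f (prime_factorization k)"
    if "prime_supported Q k" for k
    using that assms(2) unfolding prime_supported_def by (intro prime_factorization_subst_primes) blast
  have "image_mset f (prime_factorization m) = image_mset f (prime_factorization n)"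
    using pf m n eq by (metis mem_Collect_eq)
  then have "prime_factorization m = prime_factorization n"
  proof (rule multiset.inj_map_strong[rotated])
    fix p q
    assume "p \<in># prime_factorization m" "q \<in># prime_factorization n" "f p = f q"
    then show "p = q"
      using m n assms(1) unfolding prime_supported_def inj_on_def by blast
  qed
  then show "m = n"
    using m n by (metis mem_Collect_eq prime_supported_def prod_mset_prime_factorization_nat)
qed

lemma sum_prime_supported_mono:
  fixes w :: "nat \<Rightarrow> real"
  assumes "inj_on f Q" "f ` Q \<subseteq> P" "\<forall>p\<in>P. prime p" "\<And>q. q \<in> Q \<Longrightarrow> f q \<le> q"
    and w_nonneg: "\<And>n. w n \<ge> 0" and w_antitone: "\<And>m n. 0 < m \<Longrightarrow> m \<le> n \<Longrightarrow> w n \<le> w m"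
  shows "(\<Sum>n | real n \<le> x \<and> prime_supported Q n. w n)
    \<le> (\<Sum>n | real n \<le> x \<and> prime_supported P n. w n)"
proof -
  let ?F = "subst_primes f" and ?SQ = "{n. real n \<le> x \<and> prime_supported Q n}"
    and ?SP = "{n. real n \<le> x \<and> prime_supported P n}"
  have "finite ?SP"
    by (rule finite_subset[of _ "{..nat \<lfloor>x\<rfloor>}"]) (auto simp: le_nat_floor)
  have F_le: "?F n \<le> n" and F_pos: "?F n > 0" and F_SP: "?F n \<in> ?SP" if "n \<in> ?SQ" for n
  proof -
    have "prime_supported P (?F n)"
      using prime_supported_subst_primes[of Q n f P] that assms(2,3) by simp
    moreover show "?F n \<le> n"
      using that assms(4) unfolding prime_supported_def by (intro subst_primes_le) blast+
    ultimately show "?F n > 0" "?F n \<in> ?SP"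
      using that by (auto simp: prime_supported_def)
  qed
  have "\<forall>q\<in>Q. prime (f q)"
    using assms(2,3) by blast
  then have "inj_on ?F ?SQ"
    by (rule inj_on_subset[OF inj_on_subst_primes[OF assms(1)]]) auto
  have "(\<Sum>n\<in>?SQ. w n) \<le> (\<Sum>n\<in>?SQ. w (?F n))"
    using F_le F_pos w_antitone by (intro sum_mono) auto
  also have "\<dots> = (\<Sum>m\<in>?F ` ?SQ. w m)"
    using sum.reindex[OF \<open>inj_on ?F ?SQ\<close>, of w] by simp
  also have "\<dots> \<le> (\<Sum>m\<in>?SP. w m)"
    using F_SP \<open>finite ?SP\<close> w_nonneg by (intro sum_mono2) auto
  finally show ?thesis .
qed

definition primes_ap :: "int \<Rightarrow> int \<Rightarrow> real \<Rightarrow> nat set" where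
  "primes_ap d c x = {p. prime p \<and> real p \<le> x \<and> [int p = c] (mod d)}"

lemma finite_primes_ap: "finite (primes_ap d c x)"
  by (rule finite_subset[of _ "{..nat \<lfloor>x\<rfloor>}"]) (auto simp: primes_ap_def le_nat_floor)

lemma in_S_iff_prime_supported_primes_ap:
  assumes "real n \<le> x"
  shows "in_S d c n \<longleftrightarrow> prime_supported (primes_ap d c x) n"
  using prime_supported_truncate[OF assms, of "{p. [int p = c] (mod d)}"]
  by (auto simp: in_S_def prime_supported_def primes_ap_def)

lemma count_dominated_primes_ap:
  assumes "\<forall>y\<le>x. prime_count_ap d b y \<le> prime_count_ap d a y"
  shows "count_dominated (primes_ap d b x) (primes_ap d a x)"
  unfolding count_dominated_def
proof
  fix y :: nat
  have atMost: "{p\<in>primes_ap d c x. p \<le> y} = primes_ap d c (min x (real y))" for c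
    by (auto simp: primes_ap_def)
  have "prime_count_ap d b (min x y) \<le> prime_count_ap d a (min x y)"
    using assms by simp
  then show "card {p\<in>primes_ap d b x. p \<le> y} \<le> card {p\<in>primes_ap d a x. p \<le> y}"
    unfolding atMost by (simp add: prime_count_ap_def primes_ap_def)
qed

lemma sum_in_S_mono:
  fixes w :: "nat \<Rightarrow> real"
  assumes "\<forall>y\<le>x. prime_count_ap d b y \<le> prime_count_ap d a y"
    and "\<And>n. w n \<ge> 0" "\<And>m n. 0 < m \<Longrightarrow> m \<le> n \<Longrightarrow> w n \<le> w m"
  shows "(\<Sum>n | real n \<le> x \<and> in_S d b n. w n) \<le> (\<Sum>n | real n \<le> x \<and> in_S d a n. w n)"
proof -
  obtain f where f: "inj_on f (primes_ap d b x)" "f ` primes_ap d b x \<subseteq> primes_ap d a x"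
    "\<And>q. q \<in> primes_ap d b x \<Longrightarrow> f q \<le> q"
    using ex_inj_below_if_count_dominated[OF finite_primes_ap finite_primes_ap
        count_dominated_primes_ap[OF assms(1)]] by blast
  have S_eq: "{n. real n \<le> x \<and> in_S d c n} = {n. real n \<le> x \<and> prime_supported (primes_ap d c x) n}"
    for c using in_S_iff_prime_supported_primes_ap by blast
  show ?thesis
    unfolding S_eq
    by (rule sum_prime_supported_mono[OF f(1,2) _ f(3) assms(2,3)]) (simp add: primes_ap_def)
qed

theorem corollary1:
  fixes d a b :: int and x0 :: real
  assumes "d \<ge> 1"
    and "\<forall>x::real. x \<le> x0 \<longrightarrow> prime_count_ap d a x \<ge> prime_count_ap d b x"
  shows "\<forall>x::real. x \<le> x0 \<longrightarrow> N_ap d a x \<ge> N_ap d b x \<and> mu_ap d a x \<ge> mu_ap d b x"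
proof (intro allI impI)
  fix x :: real
  assume "x \<le> x0"
  then have dominated: "\<forall>y\<le>x. prime_count_ap d b y \<le> prime_count_ap d a y"
    using assms(2) by simp
  have "real (N_ap d b x) \<le> real (N_ap d a x)"
    unfolding N_ap_def real_of_card by (rule sum_in_S_mono[OF dominated]) auto
  moreover have "mu_ap d b x \<le> mu_ap d a x"
    unfolding mu_ap_def by (rule sum_in_S_mono[OF dominated]) (auto intro: frac_le)
  ultimately show "N_ap d a x \<ge> N_ap d b x \<and> mu_ap d a x \<ge> mu_ap d b x"
    by simp
qed

end
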